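(* Let $T\ge1$, $n\ge2$, $\tau\in\{1,\dots,T\}$, $z^*\in\mathbb{R}$, and for $t=1,\dots,T$ let $\mu_t\in\mathbb{R}$, $\sigma_t>0$. Under $\mathbf{H_0}$ the real numbers $X_{t,k}$ ($t\le T$, $k\le n$) are independent with $X_{t,k}\sim\mathcal{N}(\mu_t,\sigma_t^2)$; under $\mathbf{H_1^\tau}$ they are generated the same way and then $X_{\tau,J}$ is replaced by $z^*$, with $J$ uniform on $\{1,\dots,n\}$ independent of the data. Let $\hat\mu_t=\frac{1}{nt}\sum_{j=1}^t\sum_{k=1}^nX_{j,k}$ ($\hat\mu_0:=0$). Then the ratio of the joint density of $(\hat\mu_1,\dots,\hat\mu_T)$ under $\mathbf{H_1^\tau}$ to that under $\mathbf{H_0}$ equals $\varphi(\hat\mu_\tau;m_1,v_1)/\varphi(\hat\mu_\tau;m_0,v_0)$, where $\varphi(\cdot;m,v)$ is the $\mathcal{N}(m,v)$ density and \[ m_0=\tfrac{\tau-1}{\tau}\hat\mu_{\tau-1}+\tfrac{\mu_\tau}{\tau},\quad v_0=\tfrac{\sigma_\tau^2}{\tau^2n},\quad m_1=\tfrac{\tau-1}{\tau}\hat\mu_{\tau-1}+\tfrac{(n-1)\mu_\tau+z^*}{\tau n},\quad v_1=\tfrac{(n-1)\sigma_\tau^2}{\tau^2n^2}. \] In particular, the likelihood ratio test of $\mathbf{H_0}$ against $\mathbf{H_1^\tau}$ depends on the distribution parameters only through $(\mu_\tau,\sigma_\tau^2)$, not on $(\mu_t,\sigma_t^2)$ for $t\neq\tau$.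 *)

theory Defs
  imports "HOL-Probability.Probability"
begin

text \<open>Law of the data array X = (X_{t,k}), t in {1..T}, k in {1..n}, under H0:
independent, X_{t,k} ~ N(mu_t, sigma_t^2) (normal_density takes the standard deviation).\<close>
definition H0_data :: "nat \<Rightarrow> nat \<Rightarrow> (nat \<Rightarrow> real) \<Rightarrow> (nat \<Rightarrow> real) \<Rightarrow> (nat \<times> nat \<Rightarrow> real) measure" where
  "H0_data T n \<mu> \<sigma> =
     PiM ({1..T} \<times> {1..n}) (\<lambda>(t,k). density lborel (\<lambda>x. ennreal (normal_density (\<mu> t) (\<sigma> t) x)))"

definition H1_data :: "nat \<Rightarrow> nat \<Rightarrow> (nat \<Rightarrow> real) \<Rightarrow> (nat \<Rightarrow> real) \<Rightarrow> nat \<Rightarrow> real \<Rightarrow> (nat \<times> nat \<Rightarrow> real) measure" where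
  "H1_data T n \<mu> \<sigma> \<tau> z =
     distr (H0_data T n \<mu> \<sigma> \<Otimes>\<^sub>M uniform_count_measure {1..n})
           (PiM ({1..T} \<times> {1..n}) (\<lambda>_. lborel))
           (\<lambda>(x, j). x((\<tau>, j) := z))"

definition muhat :: "nat \<Rightarrow> nat \<Rightarrow> (nat \<times> nat \<Rightarrow> real) \<Rightarrow> (nat \<Rightarrow> real)" where
  "muhat T n x = (\<lambda>t\<in>{1..T}. (\<Sum>j=1..t. \<Sum>k=1..n. x (j, k)) / (real n * real t))"

abbreviation lebT :: "nat \<Rightarrow> (nat \<Rightarrow> real) measure" where
  "lebT T \<equiv> PiM {1..T} (\<lambda>_. lborel)"

definition phi :: "real \<Rightarrow> real \<Rightarrow> real \<Rightarrow> real" where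
  "phi x m v = normal_density m (sqrt v) x"

end

theory Submission
  imports Defs
begin

text \<open>The row sums S_t = X_{t,1} + ... + X_{t,n} are independent Gaussians under both
hypotheses: under H1^tau, whatever the value of J, row tau sums to z plus n - 1 independent
N(mu_tau, sigma_tau^2) variables, so mixing over J does not change their joint law. The running
means are the image of (S_1, ..., S_T) under a triangular linear bijection with inverse
S_t = n t muhat_t - n (t - 1) muhat_(t-1) and Jacobian n^T T!, so their density is the product over
t of n t g_t(n t muhat_t - n (t - 1) muhat_(t-1)), where g_t is the density of S_t. The densities
under the two hypotheses differ only in the factor t = tau, which, as a function of muhat_tau, is
a Gaussian density.\<close>

section \<open>Change of variables for the running means\<close>

lemma measurable_PiM_lborel_affine_update:
  fixes c :: "('i \<Rightarrow> real) \<Rightarrow> real"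
  assumes "i \<in> I" and [measurable]: "c \<in> borel_measurable (PiM I (\<lambda>_. lborel))"
  shows "(\<lambda>w. w(i := a * w i + c w)) \<in> measurable (PiM I (\<lambda>_. lborel)) (PiM I (\<lambda>_. lborel))"
proof (rule measurable_PiM_single')
  fix j assume "j \<in> I"
  then show "(\<lambda>w. (w(i := a * w i + c w)) j) \<in> measurable (PiM I (\<lambda>_. lborel)) lborel"
    unfolding measurable_lborel2 using assms(1) by (cases "j = i") auto
qed (use assms(1) in \<open>auto simp: space_PiM PiE_def extensional_def\<close>)

lemma nn_integral_PiM_lborel_affine_update:
  fixes G :: "('i \<Rightarrow> real) \<Rightarrow> ennreal"
  assumes I: "finite I" "i \<in> I" and a: "a \<noteq> 0"
    and c: "c \<in> borel_measurable (PiM I (\<lambda>_. lborel))" and c_indep: "\<And>w v. c (w(i := v)) = c w"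
    and G[measurable]: "G \<in> borel_measurable (PiM I (\<lambda>_. lborel))"
  shows "(\<integral>\<^sup>+ w. G (w(i := a * w i + c w)) \<partial>PiM I (\<lambda>_. lborel))
       = ennreal (1 / \<bar>a\<bar>) * (\<integral>\<^sup>+ w. G w \<partial>PiM I (\<lambda>_. lborel))"
proof -
  interpret product_sigma_finite "\<lambda>_. lborel :: real measure" by standard
  define J where "J = I - {i}"
  have J: "I = insert i J" "i \<notin> J" "finite J" using I by (auto simp: J_def)
  have G_update: "(\<lambda>w. G (w(i := a * w i + c w))) \<in> borel_measurable (PiM I (\<lambda>_. lborel))"
    using measurable_comp[OF measurable_PiM_lborel_affine_update[OF I(2) c] G] by (simp add: comp_def)
  have G_J[measurable]: "G \<in> borel_measurable (PiM (insert i J) (\<lambda>_. lborel))"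
    using G J(1) by simp
  have "(\<integral>\<^sup>+ w. G (w(i := a * w i + c w)) \<partial>PiM I (\<lambda>_. lborel))
      = (\<integral>\<^sup>+ x. (\<integral>\<^sup>+ y. G (x(i := a * y + c x)) \<partial>lborel) \<partial>PiM J (\<lambda>_. lborel))"
    using product_nn_integral_insert[OF J(3,2), of "\<lambda>w. G (w(i := a * w i + c w))"] G_update J(1)
    by (simp add: c_indep)
  also have "\<dots> = (\<integral>\<^sup>+ x. ennreal (1 / \<bar>a\<bar>) * (\<integral>\<^sup>+ y. G (x(i := y)) \<partial>lborel) \<partial>PiM J (\<lambda>_. lborel))"
  proof (rule nn_integral_cong)
    fix x assume "x \<in> space (PiM J (\<lambda>_. lborel :: real measure))"
    then have "(\<lambda>y. G (x(i := y))) \<in> borel_measurable lborel"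
      using measurable_comp[OF measurable_component_update[OF _ J(2)] G_J] by (simp add: comp_def)
    then have "(\<integral>\<^sup>+ y. G (x(i := y)) \<partial>lborel) = ennreal \<bar>a\<bar> * (\<integral>\<^sup>+ y. G (x(i := a * y + c x)) \<partial>lborel)"
      using nn_integral_real_affine[of "\<lambda>y. G (x(i := y))" a "c x"] a by (simp add: add.commute)
    then show "(\<integral>\<^sup>+ y. G (x(i := a * y + c x)) \<partial>lborel) = ennreal (1 / \<bar>a\<bar>) * (\<integral>\<^sup>+ y. G (x(i := y)) \<partial>lborel)"
      using a by (simp add: mult.assoc[symmetric] flip: ennreal_mult)
  qed
  also have "\<dots> = ennreal (1 / \<bar>a\<bar>) * (\<integral>\<^sup>+ x. (\<integral>\<^sup>+ y. G (x(i := y)) \<partial>lborel) \<partial>PiM J (\<lambda>_. lborel))"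
    by (rule nn_integral_cmult) measurable
  also have "\<dots> = ennreal (1 / \<bar>a\<bar>) * (\<integral>\<^sup>+ w. G w \<partial>PiM I (\<lambda>_. lborel))"
    using product_nn_integral_insert[OF J(3,2) G_J] J(1) by simp
  finally show ?thesis .
qed

text \<open>Letting m run from 0 to T factors the map from row sums to muhat into T affine maps,
each changing a single coordinate.\<close>

definition running_means :: "nat \<Rightarrow> nat \<Rightarrow> nat \<Rightarrow> (nat \<Rightarrow> real) \<Rightarrow> nat \<Rightarrow> real" where
  "running_means T n m r = (\<lambda>t\<in>{1..T}. if t \<le> m then (\<Sum>j=1..t. r j) / (real n * real t) else r t)"

lemma running_means_Suc:
  fixes r :: "nat \<Rightarrow> real"
  assumes "Suc m \<le> T" "n > 0"
  defines "w \<equiv> running_means T n m r"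
  shows "running_means T n (Suc m) r
       = w(Suc m := 1 / (real n * real (Suc m)) * w (Suc m) + real m * w m / real (Suc m))"
proof
  fix t
  show "running_means T n (Suc m) r t
      = (w(Suc m := 1 / (real n * real (Suc m)) * w (Suc m) + real m * w m / real (Suc m))) t"
  proof (cases "t = Suc m")
    case True
    have "real m * w m = (\<Sum>j=1..m. r j) / real n"
      using assms by (cases m) (auto simp: w_def running_means_def)
    moreover have "w (Suc m) = r (Suc m)"
      using assms by (simp add: w_def running_means_def)
    ultimately show ?thesis
      using True assms by (simp add: running_means_def add_divide_distrib)
  qed (simp add: w_def running_means_def)
qed

lemma nn_integral_running_means:
  assumes "m \<le> T" "n > 0" and "G \<in> borel_measurable (lebT T)"
  shows "(\<integral>\<^sup>+ r. G (running_means T n m r) \<partial>lebT T)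
       = ennreal (\<Prod>t=1..m. real n * real t) * (\<integral>\<^sup>+ y. G y \<partial>lebT T)"
  using assms
proof (induction m arbitrary: G)
  case 0
  have "running_means T n 0 r = r" if "r \<in> space (lebT T)" for r
    using that by (auto simp: running_means_def space_PiM PiE_def extensional_def)
  then have "(\<integral>\<^sup>+ r. G (running_means T n 0 r) \<partial>lebT T) = (\<integral>\<^sup>+ y. G y \<partial>lebT T)"
    by (intro nn_integral_cong) simp
  then show ?case by simp
next
  case (Suc m)
  define a where "a = 1 / (real n * real (Suc m))"
  define c where "c = (\<lambda>w :: nat \<Rightarrow> real. real m * w m / real (Suc m))"
  have i: "Suc m \<in> {1..T}" using Suc.prems by auto
  have c: "c \<in> borel_measurable (lebT T)"
  proof (cases "m = 0")
    case False
    then have "m \<in> {1..T}" using Suc.prems by auto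
    then show ?thesis unfolding c_def by measurable
  qed (simp add: c_def)
  have G_update: "(\<lambda>w. G (w(Suc m := a * w (Suc m) + c w))) \<in> borel_measurable (lebT T)"
    using measurable_comp[OF measurable_PiM_lborel_affine_update[OF i c] Suc.prems(3)]
    by (simp add: comp_def)
  have "(\<integral>\<^sup>+ r. G (running_means T n (Suc m) r) \<partial>lebT T)
      = (\<integral>\<^sup>+ r. (\<lambda>w. G (w(Suc m := a * w (Suc m) + c w))) (running_means T n m r) \<partial>lebT T)"
    using Suc.prems by (simp add: running_means_Suc a_def c_def)
  also have "\<dots> = ennreal (\<Prod>t=1..m. real n * real t) * (\<integral>\<^sup>+ y. G (y(Suc m := a * y (Suc m) + c y)) \<partial>lebT T)"
    by (rule Suc.IH[OF _ _ G_update]) (use Suc.prems in auto)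
  also have "(\<integral>\<^sup>+ y. G (y(Suc m := a * y (Suc m) + c y)) \<partial>lebT T) = ennreal (1 / \<bar>a\<bar>) * (\<integral>\<^sup>+ y. G y \<partial>lebT T)"
    using Suc.prems by (intro nn_integral_PiM_lborel_affine_update[OF _ i _ c]) (auto simp: a_def c_def)
  also have "ennreal (\<Prod>t=1..m. real n * real t) * (ennreal (1 / \<bar>a\<bar>) * (\<integral>\<^sup>+ y. G y \<partial>lebT T))
      = ennreal (\<Prod>t=1..Suc m. real n * real t) * (\<integral>\<^sup>+ y. G y \<partial>lebT T)"
    by (simp add: a_def mult.assoc[symmetric] prod_nonneg mult.commute flip: ennreal_mult)
  finally show ?case .
qed

text \<open>At t = 1 the second term vanishes whatever the junk value y 0 is.\<close>

definition means_to_sums :: "nat \<Rightarrow> nat \<Rightarrow> (nat \<Rightarrow> real) \<Rightarrow> nat \<Rightarrow> real" where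
  "means_to_sums T n y = (\<lambda>t\<in>{1..T}. real n * real t * y t - real n * real (t - 1) * y (t - 1))"

lemma means_to_sums_running_means:
  assumes "r \<in> space (lebT T)" "n > 0"
  shows "means_to_sums T n (running_means T n T r) = r"
proof
  fix t
  show "means_to_sums T n (running_means T n T r) t = r t"
  proof (cases "t \<in> {2..T}")
    case True
    then obtain s where "t = Suc s" "s \<ge> 1" by (cases t) auto
    then show ?thesis
      using True assms by (simp add: means_to_sums_def running_means_def)
  qed (use assms in \<open>auto simp: means_to_sums_def running_means_def space_PiM PiE_def extensional_def\<close>)
qed

lemma measurable_running_means: "running_means T n m \<in> measurable (lebT T) (lebT T)"
proof (rule measurable_PiM_single')
  fix t assume t: "t \<in> {1..T}"
  then have "(\<lambda>r. (\<Sum>j=1..t. r j) / (real n * real t)) \<in> borel_measurable (lebT T)"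
    by (intro borel_measurable_divide borel_measurable_sum) auto
  then show "(\<lambda>r. running_means T n m r t) \<in> measurable (lebT T) lborel"
    unfolding measurable_lborel2 using t by (simp add: running_means_def)
qed (auto simp: running_means_def space_PiM)

lemma measurable_means_to_sums: "means_to_sums T n \<in> measurable (lebT T) (lebT T)"
proof (rule measurable_PiM_single')
  fix t assume t: "t \<in> {1..T}"
  have "(\<lambda>y. real n * real t * y t - real n * real (t - 1) * y (t - 1)) \<in> borel_measurable (lebT T)"
  proof (cases "t = 1")
    case False
    then have "t - 1 \<in> {1..T}" using t by auto
    then show ?thesis using t by measurable
  qed (use t in simp)
  then show "(\<lambda>y. means_to_sums T n y t) \<in> measurable (lebT T) lborel"
    unfolding measurable_lborel2 using t by (simp add: means_to_sums_def)
qed (auto simp: means_to_sums_def space_PiM)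

lemma distr_lebT_running_means:
  assumes "n > 0"
  shows "distr (lebT T) (lebT T) (running_means T n T) = density (lebT T) (\<lambda>_. ennreal (\<Prod>t=1..T. real n * real t))"
proof (rule measure_eqI)
  fix A assume "A \<in> sets (distr (lebT T) (lebT T) (running_means T n T))"
  then have A: "A \<in> sets (lebT T)" by simp
  have "emeasure (distr (lebT T) (lebT T) (running_means T n T)) A
      = (\<integral>\<^sup>+ r. indicator A (running_means T n T r) \<partial>lebT T)"
    using A measurable_running_means
    by (simp add: nn_integral_distr flip: nn_integral_indicator)
  also have "\<dots> = ennreal (\<Prod>t=1..T. real n * real t) * emeasure (lebT T) A"
    using nn_integral_running_means[of T T n "indicator A"] A assms by simp
  finally show "emeasure (distr (lebT T) (lebT T) (running_means T n T)) A
      = emeasure (density (lebT T) (\<lambda>_. ennreal (\<Prod>t=1..T. real n * real t))) A"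
    using A by (simp add: emeasure_density nn_integral_cmult_indicator)
qed simp

lemma distr_density_running_means:
  assumes "n > 0" and h[measurable]: "h \<in> borel_measurable (lebT T)"
  shows "distr (density (lebT T) h) (lebT T) (running_means T n T)
       = density (lebT T) (\<lambda>y. ennreal (\<Prod>t=1..T. real n * real t) * h (means_to_sums T n y))"
proof -
  note measurable_running_means[measurable] measurable_means_to_sums[measurable]
  have "density (lebT T) h = density (lebT T) (\<lambda>r. h (means_to_sums T n (running_means T n T r)))"
    by (rule density_cong) (use assms(1) in \<open>measurable, auto simp: means_to_sums_running_means\<close>)
  also have "distr \<dots> (lebT T) (running_means T n T)
      = density (distr (lebT T) (lebT T) (running_means T n T)) (\<lambda>y. h (means_to_sums T n y))"
    by (rule density_distr[symmetric]) measurable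
  also have "\<dots> = density (lebT T) (\<lambda>y. ennreal (\<Prod>t=1..T. real n * real t) * h (means_to_sums T n y))"
    unfolding distr_lebT_running_means[OF assms(1)] by (rule density_density_eq) measurable
  finally show ?thesis .
qed

lemma indicator_PiE_eq_prod:
  assumes "finite I" "x \<in> extensional I"
  shows "indicator (Pi\<^sub>E I A) x = (\<Prod>i\<in>I. indicator (A i) (x i) :: ennreal)"
proof (cases "x \<in> Pi\<^sub>E I A")
  case False
  then obtain i where "i \<in> I" "x i \<notin> A i" using assms(2) by (auto simp: PiE_def)
  then show ?thesis using False assms(1) by (auto simp: indicator_def)
qed (auto simp: indicator_def PiE_def Pi_def)

lemma PiM_density_lborel:
  fixes g :: "'i \<Rightarrow> real \<Rightarrow> real"
  assumes I: "finite I" and g[measurable]: "\<And>i. g i \<in> borel_measurable borel" and g_nonneg: "\<And>i x. g i x \<ge> 0"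
  shows "PiM I (\<lambda>i. density lborel (\<lambda>x. ennreal (g i x)))
       = density (PiM I (\<lambda>_. lborel)) (\<lambda>w. ennreal (\<Prod>i\<in>I. g i (w i)))"
proof -
  interpret product_sigma_finite "\<lambda>i. density lborel (\<lambda>x. ennreal (g i x))"
    by (simp add: product_sigma_finite_def
        sigma_finite_measure.sigma_finite_iff_density_finite[OF lborel.sigma_finite_measure_axioms])
  interpret L: product_sigma_finite "\<lambda>_. lborel :: real measure" by standard
  show ?thesis
  proof (rule PiM_eqI[OF I, symmetric])
    fix A assume "\<And>i. i \<in> I \<Longrightarrow> A i \<in> sets (density lborel (\<lambda>x. ennreal (g i x)))"
    then have A[measurable]: "\<And>i. i \<in> I \<Longrightarrow> A i \<in> sets borel" by simp
    have dens: "(\<lambda>w. ennreal (\<Prod>i\<in>I. g i (w i))) \<in> borel_measurable (PiM I (\<lambda>_. lborel))"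
      by measurable
    have "emeasure (density (PiM I (\<lambda>_. lborel)) (\<lambda>w. ennreal (\<Prod>i\<in>I. g i (w i)))) (Pi\<^sub>E I A)
        = (\<integral>\<^sup>+ w. ennreal (\<Prod>i\<in>I. g i (w i)) * indicator (Pi\<^sub>E I A) w \<partial>PiM I (\<lambda>_. lborel))"
      using I by (intro emeasure_density dens) (auto intro!: sets_PiM_I_finite)
    also have "\<dots> = (\<integral>\<^sup>+ w. (\<Prod>i\<in>I. ennreal (g i (w i)) * indicator (A i) (w i)) \<partial>PiM I (\<lambda>_. lborel))"
      using I by (intro nn_integral_cong)
        (simp add: space_PiM PiE_iff indicator_PiE_eq_prod prod.distrib prod_ennreal g_nonneg)
    also have "\<dots> = (\<Prod>i\<in>I. \<integral>\<^sup>+ x. ennreal (g i x) * indicator (A i) x \<partial>lborel)"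
      by (rule L.product_nn_integral_prod[OF I]) measurable
    also have "\<dots> = (\<Prod>i\<in>I. emeasure (density lborel (\<lambda>x. ennreal (g i x))) (A i))"
      by (intro prod.cong refl) (simp add: emeasure_density)
    finally show "emeasure (density (PiM I (\<lambda>_. lborel)) (\<lambda>w. ennreal (\<Prod>i\<in>I. g i (w i)))) (Pi\<^sub>E I A)
        = (\<Prod>i\<in>I. emeasure (density lborel (\<lambda>x. ennreal (g i x))) (A i))" .
  qed (simp cong: sets_PiM_cong)
qed

definition row_sums :: "nat \<Rightarrow> nat \<Rightarrow> (nat \<times> nat \<Rightarrow> real) \<Rightarrow> nat \<Rightarrow> real" where
  "row_sums T n x = (\<lambda>t\<in>{1..T}. \<Sum>k=1..n. x (t, k))"

lemma muhat_eq_running_means_row_sums: "muhat T n x = running_means T n T (row_sums T n x)"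
  by (auto simp: muhat_def running_means_def row_sums_def intro!: sum.cong)

lemma measurable_row_sums: "row_sums T n \<in> measurable (PiM ({1..T} \<times> {1..n}) (\<lambda>_. lborel)) (lebT T)"
proof (rule measurable_PiM_single')
  fix t assume "t \<in> {1..T}"
  then show "(\<lambda>x. row_sums T n x t) \<in> measurable (PiM ({1..T} \<times> {1..n}) (\<lambda>_. lborel)) lborel"
    unfolding measurable_lborel2 by (simp add: row_sums_def)
qed (auto simp: row_sums_def space_PiM)

definition muhat_density :: "nat \<Rightarrow> nat \<Rightarrow> (nat \<Rightarrow> real \<Rightarrow> real) \<Rightarrow> (nat \<Rightarrow> real) \<Rightarrow> real" where
  "muhat_density T n g y = (\<Prod>t=1..T. real n * real t * g t (means_to_sums T n y t))"

lemma borel_measurable_muhat_density: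
  assumes [measurable]: "\<And>t. g t \<in> borel_measurable borel"
  shows "muhat_density T n g \<in> borel_measurable (lebT T)"
proof -
  have "(\<lambda>r. \<Prod>t=1..T. real n * real t * g t (r t)) \<in> borel_measurable (lebT T)"
    by measurable
  from measurable_comp[OF measurable_means_to_sums this] show ?thesis
    by (simp add: muhat_density_def[abs_def] comp_def)
qed

lemma distr_muhat_eq_density:
  fixes g :: "nat \<Rightarrow> real \<Rightarrow> real"
  assumes "n > 0" and D: "sets D = sets (PiM ({1..T} \<times> {1..n}) (\<lambda>_. lborel))"
    and rows: "distr D (lebT T) (row_sums T n) = PiM {1..T} (\<lambda>t. density lborel (\<lambda>x. ennreal (g t x)))"
    and g[measurable]: "\<And>t. g t \<in> borel_measurable borel" and g_nonneg: "\<And>t x. g t x \<ge> 0"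
  shows "distr D (lebT T) (muhat T n) = density (lebT T) (\<lambda>y. ennreal (muhat_density T n g y))"
proof -
  have row_sums_D: "row_sums T n \<in> measurable D (lebT T)"
    using measurable_row_sums by (simp add: measurable_cong_sets[OF D refl])
  have "distr D (lebT T) (muhat T n) = distr D (lebT T) (running_means T n T \<circ> row_sums T n)"
    by (rule distr_cong) (auto simp: muhat_eq_running_means_row_sums)
  also have "\<dots> = distr (distr D (lebT T) (row_sums T n)) (lebT T) (running_means T n T)"
    by (rule distr_distr[symmetric, OF measurable_running_means row_sums_D])
  also have "\<dots> = distr (density (lebT T) (\<lambda>r. ennreal (\<Prod>t\<in>{1..T}. g t (r t)))) (lebT T) (running_means T n T)"
    unfolding rows by (simp add: PiM_density_lborel g_nonneg)
  also have "\<dots> = density (lebT T) (\<lambda>y. ennreal (\<Prod>t=1..T. real n * real t) * ennreal (\<Prod>t=1..T. g t (means_to_sums T n y t)))"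
    using assms(1) by (intro distr_density_running_means) measurable
  also have "\<dots> = density (lebT T) (\<lambda>y. ennreal (muhat_density T n g y))"
    by (simp add: muhat_density_def prod.distrib prod_nonneg g_nonneg flip: ennreal_mult')
  finally show ?thesis .
qed

section \<open>Row sums of the Gaussian data\<close>

lemma indep_vars_PiM_components:
  assumes "I \<noteq> {}" and M: "\<And>i. i \<in> I \<Longrightarrow> prob_space (M i)"
  shows "prob_space.indep_vars (PiM I M) M (\<lambda>i x. x i) I"
proof -
  interpret prob_space "PiM I M" using M by (rule prob_space_PiM)
  have "distr (PiM I M) (PiM I M) (\<lambda>x. \<lambda>i\<in>I. x i) = distr (PiM I M) (PiM I M) (\<lambda>x. x)"
    by (rule distr_cong) (auto simp: space_PiM PiE_def extensional_def restrict_def)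
  also have "\<dots> = PiM I (\<lambda>i. distr (PiM I M) (M i) (\<lambda>x. x i))"
    unfolding distr_id using M by (intro PiM_cong refl distr_PiM_component[symmetric])
  finally show ?thesis
    using assms(1) by (subst indep_vars_iff_distr_eq_PiM') auto
qed

lemma prob_space_H0_data:
  assumes "\<forall>t\<in>{1..T}. \<sigma> t > 0"
  shows "prob_space (H0_data T n \<mu> \<sigma>)"
  unfolding H0_data_def using assms
  by (intro prob_space_PiM) (auto intro: prob_space_normal_density)

lemma sets_H0_data: "sets (H0_data T n \<mu> \<sigma>) = sets (PiM ({1..T} \<times> {1..n}) (\<lambda>_. lborel))"
  unfolding H0_data_def by (intro sets_PiM_cong) auto

lemma indep_vars_H0_data:
  assumes "T \<ge> 1" "n \<ge> 1" and \<sigma>: "\<forall>t\<in>{1..T}. \<sigma> t > 0"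
  shows "prob_space.indep_vars (H0_data T n \<mu> \<sigma>) (\<lambda>_. borel) (\<lambda>i x. x i) ({1..T} \<times> {1..n})"
proof -
  interpret prob_space "H0_data T n \<mu> \<sigma>" using \<sigma> by (rule prob_space_H0_data)
  have "indep_vars (\<lambda>(t, k). density lborel (\<lambda>x. ennreal (normal_density (\<mu> t) (\<sigma> t) x))) (\<lambda>i x. x i) ({1..T} \<times> {1..n})"
    unfolding H0_data_def using assms
    by (intro indep_vars_PiM_components) (auto intro: prob_space_normal_density)
  then have "indep_vars (\<lambda>_. borel) (\<lambda>i x. id (x i)) ({1..T} \<times> {1..n})"
    by (rule indep_vars_compose2) (auto split: prod.splits)
  then show ?thesis by simp
qed

lemma distributed_H0_data_component:
  assumes "\<forall>t\<in>{1..T}. \<sigma> t > 0" and tk: "(t, k) \<in> {1..T} \<times> {1..n}"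
  shows "distributed (H0_data T n \<mu> \<sigma>) lborel (\<lambda>x. x (t, k)) (normal_density (\<mu> t) (\<sigma> t))"
proof -
  have "distr (H0_data T n \<mu> \<sigma>) lborel (\<lambda>x. x (t, k))
      = distr (H0_data T n \<mu> \<sigma>) (density lborel (\<lambda>x. ennreal (normal_density (\<mu> t) (\<sigma> t) x))) (\<lambda>x. x (t, k))"
    by (rule distr_cong) auto
  also have "\<dots> = density lborel (\<lambda>x. ennreal (normal_density (\<mu> t) (\<sigma> t) x))"
    using distr_PiM_component[of "{1..T} \<times> {1..n}"
        "\<lambda>(t, k). density lborel (\<lambda>x. ennreal (normal_density (\<mu> t) (\<sigma> t) x))" "(t, k)"] assms
    by (auto simp: H0_data_def intro: prob_space_normal_density)
  finally show ?thesis
    using tk unfolding distributed_def measurable_cong_sets[OF sets_H0_data refl] by simp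
qed

lemma distributed_H0_data_shifted_row_sum:
  assumes "T \<ge> 1" "n \<ge> 1" and \<sigma>: "\<forall>t\<in>{1..T}. \<sigma> t > 0" and t: "t \<in> {1..T}"
    and K: "K \<subseteq> {1..n}" "K \<noteq> {}"
  shows "distributed (H0_data T n \<mu> \<sigma>) lborel (\<lambda>x. c + (\<Sum>k\<in>K. x (t, k)))
           (normal_density (c + real (card K) * \<mu> t) (sqrt (real (card K)) * \<sigma> t))"
proof -
  interpret prob_space "H0_data T n \<mu> \<sigma>" using \<sigma> by (rule prob_space_H0_data)
  have fin: "finite K" using K(1) finite_subset by blast
  have \<sigma>t: "\<sigma> t > 0" using \<sigma> t by auto
  have row: "{t} \<times> K \<subseteq> {1..T} \<times> {1..n}" using t K(1) by auto
  have row_sum: "(\<Sum>i\<in>{t} \<times> K. f i) = (\<Sum>k\<in>K. f (t, k))" for f :: "nat \<times> nat \<Rightarrow> real"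
  proof -
    have "{t} \<times> K = Pair t ` K" by auto
    then show ?thesis by (simp add: sum.reindex inj_on_def)
  qed
  have "distributed (H0_data T n \<mu> \<sigma>) lborel (\<lambda>x. \<Sum>i\<in>{t} \<times> K. x i)
          (normal_density (\<Sum>i\<in>{t} \<times> K. \<mu> (fst i)) (sqrt (\<Sum>i\<in>{t} \<times> K. (\<sigma> (fst i))\<^sup>2)))"
    using fin K \<sigma>t row t
    by (intro sum_indep_normal indep_vars_subset[OF indep_vars_H0_data[OF assms(1-3)]])
      (auto intro!: distributed_H0_data_component[OF \<sigma>] dest!: subsetD[OF K(1)])
  then have "distributed (H0_data T n \<mu> \<sigma>) lborel (\<lambda>x. \<Sum>k\<in>K. x (t, k))
          (normal_density (real (card K) * \<mu> t) (sqrt (real (card K) * (\<sigma> t)\<^sup>2)))"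
    by (simp add: row_sum)
  from normal_density_affine[OF this _ one_neq_zero, of c] show ?thesis
    using \<sigma>t fin K(2) by (simp add: real_sqrt_mult card_gt_0_iff)
qed

lemma distr_H0_data_shifted_row_sums:
  fixes K :: "nat \<Rightarrow> nat set" and c :: "nat \<Rightarrow> real"
  assumes "T \<ge> 1" "n \<ge> 1" and \<sigma>: "\<forall>t\<in>{1..T}. \<sigma> t > 0"
    and K: "\<And>t. t \<in> {1..T} \<Longrightarrow> K t \<subseteq> {1..n}" "\<And>t. t \<in> {1..T} \<Longrightarrow> K t \<noteq> {}"
  shows "distr (H0_data T n \<mu> \<sigma>) (lebT T) (\<lambda>x. \<lambda>t\<in>{1..T}. c t + (\<Sum>k\<in>K t. x (t, k)))
       = PiM {1..T} (\<lambda>t. density lborel (\<lambda>v. ennreal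
           (normal_density (c t + real (card (K t)) * \<mu> t) (sqrt (real (card (K t))) * \<sigma> t) v)))"
proof -
  interpret prob_space "H0_data T n \<mu> \<sigma>" using \<sigma> by (rule prob_space_H0_data)
  define Y where "Y = (\<lambda>t (x :: nat \<times> nat \<Rightarrow> real). c t + (\<Sum>k\<in>K t. x (t, k)))"
  have "indep_vars (\<lambda>t. PiM ({t} \<times> K t) (\<lambda>_. borel)) (\<lambda>t x. restrict x ({t} \<times> K t)) {1..T}"
    using K(1) by (intro indep_vars_restrict[OF indep_vars_H0_data[OF assms(1-3)]])
      (auto simp: disjoint_family_on_def)
  then have "indep_vars (\<lambda>_. borel) (\<lambda>t x. Y t (restrict x ({t} \<times> K t))) {1..T}"
    by (rule indep_vars_compose2) (auto simp: Y_def intro!: borel_measurable_add borel_measurable_sum)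
  moreover have "(\<lambda>t x. Y t (restrict x ({t} \<times> K t))) = Y"
    by (intro ext) (simp add: Y_def)
  ultimately have indep_rows: "indep_vars (\<lambda>_. borel) Y {1..T}"
    by simp
  have "distr (H0_data T n \<mu> \<sigma>) (lebT T) (\<lambda>x. \<lambda>t\<in>{1..T}. c t + (\<Sum>k\<in>K t. x (t, k)))
      = distr (H0_data T n \<mu> \<sigma>) (PiM {1..T} (\<lambda>_. borel)) (\<lambda>x. \<lambda>t\<in>{1..T}. Y t x)"
    by (rule distr_cong) (auto simp: Y_def cong: sets_PiM_cong)
  also have "\<dots> = PiM {1..T} (\<lambda>t. distr (H0_data T n \<mu> \<sigma>) borel (Y t))"
    using indep_rows assms(1) by (subst indep_vars_iff_distr_eq_PiM'[symmetric]) (auto simp: indep_vars_def)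
  also have "\<dots> = PiM {1..T} (\<lambda>t. density lborel (\<lambda>v. ennreal
           (normal_density (c t + real (card (K t)) * \<mu> t) (sqrt (real (card (K t))) * \<sigma> t) v)))"
  proof (rule PiM_cong[OF refl])
    fix t assume t: "t \<in> {1..T}"
    have "distr (H0_data T n \<mu> \<sigma>) borel (Y t) = distr (H0_data T n \<mu> \<sigma>) lborel (Y t)"
      by (rule distr_cong) auto
    with distributed_H0_data_shifted_row_sum[OF assms(1-3) t K(1,2)[OF t], where c = "c t"]
    show "distr (H0_data T n \<mu> \<sigma>) borel (Y t) = density lborel (\<lambda>v. ennreal
           (normal_density (c t + real (card (K t)) * \<mu> t) (sqrt (real (card (K t))) * \<sigma> t) v))"
      by (simp add: distributed_def Y_def)
  qed
  finally show ?thesis .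
qed

definition H0_row_density :: "nat \<Rightarrow> (nat \<Rightarrow> real) \<Rightarrow> (nat \<Rightarrow> real) \<Rightarrow> nat \<Rightarrow> real \<Rightarrow> real" where
  "H0_row_density n \<mu> \<sigma> t = normal_density (real n * \<mu> t) (sqrt (real n) * \<sigma> t)"

definition H1_row_density :: "nat \<Rightarrow> (nat \<Rightarrow> real) \<Rightarrow> (nat \<Rightarrow> real) \<Rightarrow> nat \<Rightarrow> real \<Rightarrow> nat \<Rightarrow> real \<Rightarrow> real" where
  "H1_row_density n \<mu> \<sigma> \<tau> z t =
     (if t = \<tau> then normal_density (z + real (n - 1) * \<mu> t) (sqrt (real (n - 1)) * \<sigma> t)
      else H0_row_density n \<mu> \<sigma> t)"

lemma borel_measurable_H0_row_density[measurable]: "H0_row_density n \<mu> \<sigma> t \<in> borel_measurable borel"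
  by (simp add: H0_row_density_def)

lemma borel_measurable_H1_row_density[measurable]: "H1_row_density n \<mu> \<sigma> \<tau> z t \<in> borel_measurable borel"
  by (simp add: H1_row_density_def)

lemma H0_row_density_nonneg: "H0_row_density n \<mu> \<sigma> t x \<ge> 0"
  by (simp add: H0_row_density_def)

lemma H1_row_density_nonneg: "H1_row_density n \<mu> \<sigma> \<tau> z t x \<ge> 0"
  by (simp add: H1_row_density_def H0_row_density_nonneg)

lemma H0_row_density_pos: "n > 0 \<Longrightarrow> \<sigma> t > 0 \<Longrightarrow> H0_row_density n \<mu> \<sigma> t x > 0"
  by (simp add: H0_row_density_def normal_density_pos)

lemma distr_H0_row_sums:
  assumes "T \<ge> 1" "n \<ge> 1" "\<forall>t\<in>{1..T}. \<sigma> t > 0"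
  shows "distr (H0_data T n \<mu> \<sigma>) (lebT T) (row_sums T n)
       = PiM {1..T} (\<lambda>t. density lborel (\<lambda>v. ennreal (H0_row_density n \<mu> \<sigma> t v)))"
  using distr_H0_data_shifted_row_sums[OF assms, where K = "\<lambda>_. {1..n}" and c = "\<lambda>_. 0"] assms(2)
  by (simp add: row_sums_def[abs_def] H0_row_density_def)

lemma distr_H0_row_sums_replace_entry:
  assumes "T \<ge> 1" "n \<ge> 2" "\<forall>t\<in>{1..T}. \<sigma> t > 0" and \<tau>: "\<tau> \<in> {1..T}" and j: "j \<in> {1..n}"
  shows "distr (H0_data T n \<mu> \<sigma>) (lebT T) (\<lambda>x. row_sums T n (x((\<tau>, j) := z)))
       = PiM {1..T} (\<lambda>t. density lborel (\<lambda>v. ennreal (H1_row_density n \<mu> \<sigma> \<tau> z t v)))"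
proof -
  define K where "K t = (if t = \<tau> then {1..n} - {j} else {1..n})" for t
  define c where "c t = (if t = \<tau> then z else 0)" for t
  have "(if j = 1 then 2 else 1) \<in> {1..n} - {j}" using assms(2) j by auto
  then have K_row: "K t \<subseteq> {1..n}" "K t \<noteq> {}" for t
    using assms(2) by (auto simp: K_def)
  have shifted: "(\<lambda>x. row_sums T n (x((\<tau>, j) := z))) = (\<lambda>x. \<lambda>t\<in>{1..T}. c t + (\<Sum>k\<in>K t. x (t, k)))"
  proof (intro ext)
    fix x t
    have "(\<Sum>k=1..n. (x((\<tau>, j) := z)) (\<tau>, k)) = z + (\<Sum>k\<in>{1..n} - {j}. x (\<tau>, k))"
      using j by (simp add: sum.remove[of _ j])
    then show "row_sums T n (x((\<tau>, j) := z)) t = (\<lambda>t\<in>{1..T}. c t + (\<Sum>k\<in>K t. x (t, k))) t"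
      using \<tau> by (cases "t = \<tau>") (simp_all add: row_sums_def c_def K_def)
  qed
  have "distr (H0_data T n \<mu> \<sigma>) (lebT T) (\<lambda>x. row_sums T n (x((\<tau>, j) := z)))
      = PiM {1..T} (\<lambda>t. density lborel (\<lambda>v. ennreal
           (normal_density (c t + real (card (K t)) * \<mu> t) (sqrt (real (card (K t))) * \<sigma> t) v)))"
    unfolding shifted using assms(1,2) by (intro distr_H0_data_shifted_row_sums[OF _ _ assms(3) K_row]) auto
  also have "\<dots> = PiM {1..T} (\<lambda>t. density lborel (\<lambda>v. ennreal (H1_row_density n \<mu> \<sigma> \<tau> z t v)))"
    using j by (intro PiM_cong refl) (simp add: H1_row_density_def H0_row_density_def c_def K_def card_Diff_singleton)
  finally show ?thesis .
qed

lemma distr_pair_measure_eq_if_slices: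
  assumes M: "sigma_finite_measure M" and N: "prob_space N"
    and F: "F \<in> measurable (M \<Otimes>\<^sub>M N) P"
    and slices: "\<And>j. j \<in> space N \<Longrightarrow> distr M P (\<lambda>x. F (x, j)) = Q"
    and sets_Q: "sets Q = sets P"
  shows "distr (M \<Otimes>\<^sub>M N) P F = Q"
proof (rule measure_eqI)
  interpret N: prob_space N by (rule N)
  interpret pair_sigma_finite M N
    using M by (simp add: pair_sigma_finite_def N.sigma_finite_measure_axioms)
  fix A assume "A \<in> sets (distr (M \<Otimes>\<^sub>M N) P F)"
  then have A[measurable]: "A \<in> sets P" by simp
  have "emeasure (distr (M \<Otimes>\<^sub>M N) P F) A = (\<integral>\<^sup>+ p. indicator A (F p) \<partial>(M \<Otimes>\<^sub>M N))"
    using F by (simp add: nn_integral_distr flip: nn_integral_indicator)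
  also have "\<dots> = (\<integral>\<^sup>+ j. (\<integral>\<^sup>+ x. indicator A (F (x, j)) \<partial>M) \<partial>N)"
    using F by (intro nn_integral_snd[symmetric]) measurable
  also have "\<dots> = (\<integral>\<^sup>+ j. emeasure Q A \<partial>N)"
  proof (rule nn_integral_cong)
    fix j assume j: "j \<in> space N"
    have "(\<lambda>x. F (x, j)) \<in> measurable M P"
      using measurable_comp[OF measurable_Pair2'[OF j] F] by (simp add: comp_def)
    then have "(\<integral>\<^sup>+ x. indicator A (F (x, j)) \<partial>M) = emeasure (distr M P (\<lambda>x. F (x, j))) A"
      by (simp add: nn_integral_distr flip: nn_integral_indicator)
    then show "(\<integral>\<^sup>+ x. indicator A (F (x, j)) \<partial>M) = emeasure Q A"
      by (simp add: slices[OF j])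
  qed
  also have "\<dots> = emeasure Q A"
    by (simp add: N.emeasure_space_1)
  finally show "emeasure (distr (M \<Otimes>\<^sub>M N) P F) A = emeasure Q A" .
qed (simp add: sets_Q)

lemma measurable_fun_upd_pair:
  assumes "countable J" and f: "\<And>j. j \<in> J \<Longrightarrow> f j \<in> I" and z: "\<And>j. j \<in> J \<Longrightarrow> z \<in> space (M (f j))"
  shows "(\<lambda>(x, j). x(f j := z)) \<in> measurable (PiM I M \<Otimes>\<^sub>M count_space J) (PiM I M)"
proof (rule measurable_PiM_single')
  fix i assume i: "i \<in> I"
  have "(\<lambda>p. ((fst p)(f j := z)) i) \<in> measurable (PiM I M \<Otimes>\<^sub>M count_space J) (M i)" if "j \<in> J" for j
  proof (cases "i = f j")
    case True
    then show ?thesis using z[OF that] by simp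
  next
    case False
    have "(\<lambda>p. fst p i) \<in> measurable (PiM I M \<Otimes>\<^sub>M count_space J) (M i)"
      using i by measurable
    then show ?thesis using False by simp
  qed
  from measurable_compose_countable'[OF this measurable_snd assms(1)]
  show "(\<lambda>p. (case p of (x, j) \<Rightarrow> x(f j := z)) i) \<in> measurable (PiM I M \<Otimes>\<^sub>M count_space J) (M i)"
    by (simp add: case_prod_beta)
qed (use f z in \<open>auto simp: space_pair_measure space_PiM PiE_def extensional_def\<close>)

lemma distr_H1_row_sums:
  assumes "T \<ge> 1" "n \<ge> 2" and \<sigma>: "\<forall>t\<in>{1..T}. \<sigma> t > 0" and \<tau>: "\<tau> \<in> {1..T}"
  shows "distr (H1_data T n \<mu> \<sigma> \<tau> z) (lebT T) (row_sums T n)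
       = PiM {1..T} (\<lambda>t. density lborel (\<lambda>v. ennreal (H1_row_density n \<mu> \<sigma> \<tau> z t v)))"
proof -
  let ?F = "\<lambda>(x, j). x((\<tau>, j) := z)"
  have sets_eq: "sets (H0_data T n \<mu> \<sigma> \<Otimes>\<^sub>M uniform_count_measure {1..n})
      = sets (PiM ({1..T} \<times> {1..n}) (\<lambda>_. lborel) \<Otimes>\<^sub>M count_space {1..n})"
    by (intro sets_pair_measure_cong sets_H0_data sets_uniform_count_measure_count_space)
  have "?F \<in> measurable (PiM ({1..T} \<times> {1..n}) (\<lambda>_. lborel) \<Otimes>\<^sub>M count_space {1..n})
      (PiM ({1..T} \<times> {1..n}) (\<lambda>_. lborel))"
    using \<tau> by (intro measurable_fun_upd_pair) auto
  then have F: "?F \<in> measurable (H0_data T n \<mu> \<sigma> \<Otimes>\<^sub>M uniform_count_measure {1..n})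
      (PiM ({1..T} \<times> {1..n}) (\<lambda>_. lborel))"
    unfolding measurable_cong_sets[OF sets_eq refl] .
  have "distr (H1_data T n \<mu> \<sigma> \<tau> z) (lebT T) (row_sums T n)
      = distr (H0_data T n \<mu> \<sigma> \<Otimes>\<^sub>M uniform_count_measure {1..n}) (lebT T) (row_sums T n \<circ> ?F)"
    unfolding H1_data_def by (rule distr_distr[OF measurable_row_sums F])
  also have "\<dots> = PiM {1..T} (\<lambda>t. density lborel (\<lambda>v. ennreal (H1_row_density n \<mu> \<sigma> \<tau> z t v)))"
  proof (rule distr_pair_measure_eq_if_slices)
    show "sigma_finite_measure (H0_data T n \<mu> \<sigma>)"
      using prob_space_H0_data[OF \<sigma>] by (rule prob_space_imp_sigma_finite)
    show "prob_space (uniform_count_measure {1..n})"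
      using assms(2) by (intro prob_space_uniform_count_measure) auto
    show "row_sums T n \<circ> ?F \<in> measurable (H0_data T n \<mu> \<sigma> \<Otimes>\<^sub>M uniform_count_measure {1..n}) (lebT T)"
      by (rule measurable_comp[OF F measurable_row_sums])
    fix j assume "j \<in> space (uniform_count_measure {1..n})"
    then have "j \<in> {1..n}" by (simp add: space_uniform_count_measure)
    then show "distr (H0_data T n \<mu> \<sigma>) (lebT T) (\<lambda>x. (row_sums T n \<circ> ?F) (x, j))
        = PiM {1..T} (\<lambda>t. density lborel (\<lambda>v. ennreal (H1_row_density n \<mu> \<sigma> \<tau> z t v)))"
      using distr_H0_row_sums_replace_entry[OF assms] by simp
  qed (simp cong: sets_PiM_cong)
  finally show ?thesis .
qed

section \<open>The likelihood ratio\<close>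

lemma muhat_density_nonneg:
  assumes "\<And>t x. g t x \<ge> 0"
  shows "muhat_density T n g y \<ge> 0"
  unfolding muhat_density_def using assms by (intro prod_nonneg) simp

lemma muhat_density_pos:
  assumes "n > 0" and "\<And>t x. t \<in> {1..T} \<Longrightarrow> g t x > 0"
  shows "muhat_density T n g y > 0"
  unfolding muhat_density_def using assms by (intro prod_pos) simp

lemma muhat_density_ratio:
  assumes \<tau>: "\<tau> \<in> {1..T}" and g': "\<And>t. t \<in> {1..T} \<Longrightarrow> t \<noteq> \<tau> \<Longrightarrow> g' t = g t"
    and "n > 0" and g: "\<And>t x. t \<in> {1..T} \<Longrightarrow> g t x > 0"
  shows "muhat_density T n g' y / muhat_density T n g y
       = (real n * real \<tau> * g' \<tau> (means_to_sums T n y \<tau>)) / (real n * real \<tau> * g \<tau> (means_to_sums T n y \<tau>))"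
proof -
  define P where "P = (\<Prod>t\<in>{1..T} - {\<tau>}. real n * real t * g t (means_to_sums T n y t))"
  have "P > 0" unfolding P_def using assms(3) g by (intro prod_pos) simp
  moreover have "muhat_density T n g y = real n * real \<tau> * g \<tau> (means_to_sums T n y \<tau>) * P"
    unfolding muhat_density_def P_def using \<tau> by (simp add: prod.remove)
  moreover have "muhat_density T n g' y = real n * real \<tau> * g' \<tau> (means_to_sums T n y \<tau>) * P"
    unfolding muhat_density_def P_def using \<tau> g' by (simp add: prod.remove)
  ultimately show ?thesis by simp
qed

lemma normal_density_scale:
  fixes c s :: real
  assumes c: "c > 0" and s: "s > 0"
  shows "c * normal_density a s (c * y - d) = normal_density ((a + d) / c) (s / c) y"
proof -
  have exponent: "(c * y - d - a)\<^sup>2 / (2 * s\<^sup>2) = (y - (a + d) / c)\<^sup>2 / (2 * (s / c)\<^sup>2)"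
    using c s by (simp add: field_simps power2_eq_square)
  have normalizer: "sqrt (2 * pi * (s / c)\<^sup>2) = sqrt (2 * pi * s\<^sup>2) / c"
    using c s by (simp add: power_divide real_sqrt_divide real_sqrt_mult)
  have "sqrt (2 * pi * s\<^sup>2) > 0" using s by simp
  then show ?thesis
    unfolding normal_density_def normalizer using c by (simp add: exponent field_simps)
qed

lemma normal_density_means_to_sums_eq_phi:
  fixes k s :: real
  assumes \<tau>: "\<tau> \<in> {1..T}" and "n > 0" "k > 0" "s > 0"
  shows "real n * real \<tau> * normal_density a (sqrt k * s) (means_to_sums T n y \<tau>)
       = phi (y \<tau>) ((real \<tau> - 1) / real \<tau> * (if \<tau> = 1 then 0 else y (\<tau> - 1)) + a / (real \<tau> * real n))
           (k * s\<^sup>2 / ((real \<tau>)\<^sup>2 * (real n)\<^sup>2))"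
proof -
  define prev where "prev = (if \<tau> = 1 then 0 else y (\<tau> - 1))"
  have "real n > 0" "real \<tau> > 0" using assms by auto
  then have pos: "real n * real \<tau> > 0" by simp
  have "means_to_sums T n y \<tau> = real n * real \<tau> * y \<tau> - real n * (real \<tau> - 1) * prev"
    using \<tau> by (auto simp: means_to_sums_def prev_def)
  then have "real n * real \<tau> * normal_density a (sqrt k * s) (means_to_sums T n y \<tau>)
      = normal_density ((a + real n * (real \<tau> - 1) * prev) / (real n * real \<tau>)) (sqrt k * s / (real n * real \<tau>)) (y \<tau>)"
    using assms by (simp add: normal_density_scale[OF pos])
  also have "(a + real n * (real \<tau> - 1) * prev) / (real n * real \<tau>) = (real \<tau> - 1) / real \<tau> * prev + a / (real \<tau> * real n)"
    using \<open>real n > 0\<close> \<open>real \<tau> > 0\<close> by (simp add: field_simps)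
  also have "sqrt k * s / (real n * real \<tau>) = sqrt (k * s\<^sup>2 / ((real \<tau>)\<^sup>2 * (real n)\<^sup>2))"
    using assms by (simp add: real_sqrt_divide real_sqrt_mult)
  finally show ?thesis by (simp add: phi_def prev_def)
qed

lemma H0_row_density_means_to_sums_eq_phi:
  assumes "\<tau> \<in> {1..T}" "n > 0" "\<sigma> \<tau> > 0"
  shows "real n * real \<tau> * H0_row_density n \<mu> \<sigma> \<tau> (means_to_sums T n y \<tau>)
       = phi (y \<tau>) ((real \<tau> - 1) / real \<tau> * (if \<tau> = 1 then 0 else y (\<tau> - 1)) + \<mu> \<tau> / real \<tau>)
           ((\<sigma> \<tau>)\<^sup>2 / ((real \<tau>)\<^sup>2 * real n))"
proof -
  have "real n * \<mu> \<tau> / (real \<tau> * real n) = \<mu> \<tau> / real \<tau>"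
    "real n * (\<sigma> \<tau>)\<^sup>2 / ((real \<tau>)\<^sup>2 * (real n)\<^sup>2) = (\<sigma> \<tau>)\<^sup>2 / ((real \<tau>)\<^sup>2 * real n)"
    using assms(2) by (simp_all add: power2_eq_square)
  with normal_density_means_to_sums_eq_phi[OF assms(1,2) _ assms(3),
      where k = "real n" and a = "real n * \<mu> \<tau>" and y = y]
  show ?thesis using assms(2) by (simp add: H0_row_density_def)
qed

lemma H1_row_density_means_to_sums_eq_phi:
  assumes "\<tau> \<in> {1..T}" "n \<ge> 2" "\<sigma> \<tau> > 0"
  shows "real n * real \<tau> * H1_row_density n \<mu> \<sigma> \<tau> z \<tau> (means_to_sums T n y \<tau>)
       = phi (y \<tau>) ((real \<tau> - 1) / real \<tau> * (if \<tau> = 1 then 0 else y (\<tau> - 1))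
                    + ((real n - 1) * \<mu> \<tau> + z) / (real \<tau> * real n))
           ((real n - 1) * (\<sigma> \<tau>)\<^sup>2 / ((real \<tau>)\<^sup>2 * (real n)\<^sup>2))"
  using normal_density_means_to_sums_eq_phi[OF assms(1) _ _ assms(3),
      where n = n and k = "real (n - 1)" and a = "z + real (n - 1) * \<mu> \<tau>" and y = y] assms(2)
  by (simp add: H1_row_density_def add.commute)

lemma muhat_density_H1_div_H0:
  assumes \<tau>: "\<tau> \<in> {1..T}" and n: "n \<ge> 2" and \<sigma>: "\<forall>t\<in>{1..T}. \<sigma> t > 0"
  shows "muhat_density T n (H1_row_density n \<mu> \<sigma> \<tau> z) y / muhat_density T n (H0_row_density n \<mu> \<sigma>) y
      = phi (y \<tau>) ((real \<tau> - 1) / real \<tau> * (if \<tau> = 1 then 0 else y (\<tau> - 1))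
                    + ((real n - 1) * \<mu> \<tau> + z) / (real \<tau> * real n))
                ((real n - 1) * (\<sigma> \<tau>)\<^sup>2 / ((real \<tau>)\<^sup>2 * (real n)\<^sup>2))
        / phi (y \<tau>) ((real \<tau> - 1) / real \<tau> * (if \<tau> = 1 then 0 else y (\<tau> - 1)) + \<mu> \<tau> / real \<tau>)
                ((\<sigma> \<tau>)\<^sup>2 / ((real \<tau>)\<^sup>2 * real n))"
proof -
  have "\<sigma> \<tau> > 0" using \<sigma> \<tau> by auto
  have "muhat_density T n (H1_row_density n \<mu> \<sigma> \<tau> z) y / muhat_density T n (H0_row_density n \<mu> \<sigma>) y
      = real n * real \<tau> * H1_row_density n \<mu> \<sigma> \<tau> z \<tau> (means_to_sums T n y \<tau>)
        / (real n * real \<tau> * H0_row_density n \<mu> \<sigma> \<tau> (means_to_sums T n y \<tau>))"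
    using \<tau> n \<sigma> by (intro muhat_density_ratio H0_row_density_pos) (auto simp: H1_row_density_def)
  then show ?thesis
    using \<tau> n \<open>\<sigma> \<tau> > 0\<close>
    by (simp only: H0_row_density_means_to_sums_eq_phi H1_row_density_means_to_sums_eq_phi)
qed

theorem theoremC1:
  fixes T n \<tau> :: nat and z :: real and \<mu> \<sigma> :: "nat \<Rightarrow> real"
  assumes "T \<ge> 1" and "n \<ge> 2" and "\<tau> \<in> {1..T}"
    and "\<forall>t\<in>{1..T}. \<sigma> t > 0"
  shows "\<exists>f0 f1 :: (nat \<Rightarrow> real) \<Rightarrow> real.
     f0 \<in> borel_measurable (lebT T) \<and> f1 \<in> borel_measurable (lebT T) \<and>
     distr (H0_data T n \<mu> \<sigma>) (lebT T) (muhat T n) = density (lebT T) (\<lambda>y. ennreal (f0 y)) \<and>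
     distr (H1_data T n \<mu> \<sigma> \<tau> z) (lebT T) (muhat T n) = density (lebT T) (\<lambda>y. ennreal (f1 y)) \<and>
     (\<forall>y\<in>space (lebT T). f0 y > 0 \<and> f1 y \<ge> 0 \<and>
        (let prev = (if \<tau> = 1 then 0 else y (\<tau> - 1));
             m0 = (real \<tau> - 1) / real \<tau> * prev + \<mu> \<tau> / real \<tau>;
             v0 = (\<sigma> \<tau>)\<^sup>2 / ((real \<tau>)\<^sup>2 * real n);
             m1 = (real \<tau> - 1) / real \<tau> * prev + ((real n - 1) * \<mu> \<tau> + z) / (real \<tau> * real n);
             v1 = (real n - 1) * (\<sigma> \<tau>)\<^sup>2 / ((real \<tau>)\<^sup>2 * (real n)\<^sup>2)
         in f1 y / f0 y = phi (y \<tau>) m1 v1 / phi (y \<tau>) m0 v0))"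
proof -
  note T = assms(1) and n = assms(2) and \<tau> = assms(3) and \<sigma> = assms(4)
  let ?f0 = "muhat_density T n (H0_row_density n \<mu> \<sigma>)"
  let ?f1 = "muhat_density T n (H1_row_density n \<mu> \<sigma> \<tau> z)"
  have "?f0 \<in> borel_measurable (lebT T)" "?f1 \<in> borel_measurable (lebT T)"
    by (intro borel_measurable_muhat_density borel_measurable_H0_row_density borel_measurable_H1_row_density)+
  moreover have "distr (H0_data T n \<mu> \<sigma>) (lebT T) (muhat T n) = density (lebT T) (\<lambda>y. ennreal (?f0 y))"
    using n by (intro distr_muhat_eq_density[OF _ sets_H0_data distr_H0_row_sums[OF T _ \<sigma>]])
      (auto simp: H0_row_density_nonneg)
  moreover have "distr (H1_data T n \<mu> \<sigma> \<tau> z) (lebT T) (muhat T n) = density (lebT T) (\<lambda>y. ennreal (?f1 y))"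
    using n by (intro distr_muhat_eq_density[OF _ _ distr_H1_row_sums[OF T n \<sigma> \<tau>]])
      (auto simp: H1_data_def H1_row_density_nonneg)
  moreover have "?f0 y > 0" "?f1 y \<ge> 0" for y
    using n \<sigma> by (auto intro!: muhat_density_pos H0_row_density_pos muhat_density_nonneg H1_row_density_nonneg)
  ultimately show ?thesis
    using muhat_density_H1_div_H0[OF \<tau> n \<sigma>] unfolding Let_def by blast
qed

end
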